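(* Let $\theta\ge1$ and let $V$ be twice continuously differentiable on $[0,+\infty)$, with $\lim_{x\to+\infty}V(x)/\log x=+\infty$, and such that $V''(x)x+V'(x)>0$ and $V''(x)\ge0$ for all $x>0$. Then there exists a unique $c\in(0,+\infty)$ such that $$\frac{1}{2\pi i}\oint_\gamma\frac{V'(J_c(s))J_c(s)}{s}\,ds=1+\theta.$$
   Context: For $c>0$, $J_c(s)=c(s+1)\left(\frac{s+1}{s}\right)^{1/\theta}$, with branch analytic in $\mathbb C\setminus[-1,0]$ and $J_c(s)\sim cs$ as $s\to\infty$. $\gamma=\gamma_1\cup\gamma_2$ is the counterclockwise oriented closed curve formed by the two complex conjugate arcs joining $-1$ and $1/\theta$ in the upper and lower half-planes on which $J_c$ is real and nonnegative (these arcs do not depend on $c$; each is mapped bijectively onto $[0,c(1+\theta)^{1+1/\theta}/\theta]$). *)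

theory Defs
  imports "HOL-Complex_Analysis.Complex_Analysis"
begin

text \<open>This is analytic on
  C minus [-1,0] (since 1 + 1/s is a nonpositive real iff s in [-1,0))
  and satisfies J_c(s) ~ c s at infinity.\<close>
definition Jc :: "real \<Rightarrow> real \<Rightarrow> complex \<Rightarrow> complex" where
  "Jc \<theta> c s = complex_of_real c * (s + 1) * ((1 + 1 / s) powr complex_of_real (1 / \<theta>))"

text \<open>Parametrisation of the upper arc gamma_1 on which J_c is real and
  nonnegative: with a = arg(s+1) in [0, pi/(theta+1)] one has arg s = (theta+1) a
  and s = sin a / sin(theta a) * e^{i(theta+1)a}.  At a = 0 the point is 1/theta,
  at a = pi/(theta+1) the point is -1.\<close>
definition arc_pt :: "real \<Rightarrow> real \<Rightarrow> complex" where
  "arc_pt \<theta> a = (if a = 0 then complex_of_real (1 / \<theta>)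
      else complex_of_real (sin a / sin (\<theta> * a)) * cis ((\<theta> + 1) * a))"

definition gamma_up :: "real \<Rightarrow> real \<Rightarrow> complex" where
  "gamma_up \<theta> t = arc_pt \<theta> (t * (pi / (\<theta> + 1)))"

definition gamma_curve :: "real \<Rightarrow> real \<Rightarrow> complex" where
  "gamma_curve \<theta> = gamma_up \<theta> +++ reversepath (cnj \<circ> gamma_up \<theta>)"

end

theory Submission
  imports Defs
begin

text \<open>On the upper arc, with a = arg(s+1) in [0, \<pi>/(\<theta>+1)], one has s = (sin a / sin
  \<theta>a) e^{i(\<theta>+1)a} and 1 + 1/s = (sin (\<theta>+1)a / sin a) e^{-i\<theta>a}. As
  \<theta>a < \<pi>, the principal power gives J_c(s) = c \<rho>(a) with \<rho> real,
  continuous, nonnegative, and positive except at s = -1. Since J_c(cnj s) = cnj (J_c s), the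
  integrand is conjugation symmetric, so the integral over \<gamma> is 2i times the imaginary
  part of the integral over the upper arc; there Im(\<gamma>'/\<gamma>) = \<pi> in the
  parametrisation a = t\<pi>/(\<theta>+1), so the integral divided by 2\<pi>i is H(c) =
  \<integral> g(c \<rho>(t\<pi>/(\<theta>+1))) dt over [0,1], with g(x) = x V'(x). The
  hypothesis (x V')' = x V'' + V' > 0 makes g, hence H, strictly increasing with H(0) = 0, and
  V/log x \<rightarrow> \<infinity> forces g, hence H, to be unbounded; so H(c) = 1 + \<theta>
  has exactly one root.\<close>

text \<open>The power series of sin x / x; unlike the quotient it is visibly smooth at 0, which on the
  arc is the point 1/\<theta>.\<close>

definition sinc :: "real \<Rightarrow> real" where
  "sinc x = (\<Sum>n. sin_coeff (Suc n) * x ^ n)"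

lemma summable_sinc_series: "summable (\<lambda>n. sin_coeff (Suc n) * x ^ n)"
proof -
  have "summable (\<lambda>n. sin_coeff n * x ^ n)"
    using sin_converges[of x] by (simp add: sums_iff)
  then show ?thesis by (rule powser_split_head(3))
qed

lemma sin_eq_times_sinc: "sin x = x * sinc x"
proof -
  have "sinc x * x = (\<Sum>n. sin_coeff n * x ^ n) - sin_coeff 0"
    unfolding sinc_def using sin_converges[of x] by (intro powser_split_head(2)) (simp add: sums_iff)
  then show ?thesis using sin_converges[of x] by (simp add: sums_iff mult.commute)
qed

lemma sinc_0 [simp]: "sinc 0 = 1"
  unfolding sinc_def using powser_zero[of "\<lambda>n. sin_coeff (Suc n)"] by (simp add: sin_coeff_def)

lemma sinc_eq: "x \<noteq> 0 \<Longrightarrow> sinc x = sin x / x"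
  using sin_eq_times_sinc[of x] by simp

lemma sinc_pos:
  assumes "\<bar>x\<bar> < pi"
  shows "0 < sinc x"
proof (cases "x = 0")
  case False
  have "sinc x = sin \<bar>x\<bar> / \<bar>x\<bar>"
    using False by (cases "0 \<le> x") (simp_all add: sinc_eq)
  then show ?thesis using False assms by (simp add: sin_gt_zero)
qed simp

lemma sinc_nonneg:
  assumes "\<bar>x\<bar> \<le> pi"
  shows "0 \<le> sinc x"
proof (cases "\<bar>x\<bar> = pi")
  case True
  then have "x = pi \<or> x = - pi" by linarith
  then show ?thesis by (auto simp: sinc_eq)
qed (use assms sinc_pos[of x] in auto)

lemma C1_differentiable_on_real_iff:
  fixes f :: "real \<Rightarrow> real"
  shows "f C1_differentiable_on S \<longleftrightarrow>
    (\<exists>D. (\<forall>x\<in>S. (f has_real_derivative D x) (at x)) \<and> continuous_on S D)"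
  by (simp add: C1_differentiable_on_def has_real_derivative_iff_has_vector_derivative)

lemma sinc_C1_differentiable: "sinc C1_differentiable_on UNIV"
proof -
  define D where "D x = (\<Sum>n. diffs (\<lambda>n. sin_coeff (Suc n)) n * x ^ n)" for x
  have "(sinc has_real_derivative D x) (at x)" for x
    unfolding sinc_def D_def
    by (rule termdiffs_strong_converges_everywhere) (rule summable_sinc_series)
  moreover have "isCont D x" for x
  proof -
    have "\<exists>E. (D has_real_derivative E) (at x)"
      unfolding D_def
      by (rule exI, rule termdiffs_strong_converges_everywhere,
          rule termdiff_converges_all, rule summable_sinc_series)
    then show ?thesis using DERIV_isCont by blast
  qed
  ultimately show ?thesis
    unfolding C1_differentiable_on_real_iff by (intro exI[of _ D]) (simp add: continuous_at_imp_continuous_on)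
qed

lemma continuous_on_sinc [continuous_intros]:
  "continuous_on S f \<Longrightarrow> continuous_on S (\<lambda>x. sinc (f x))"
  by (rule continuous_on_compose2[OF C1_differentiable_imp_continuous_on[OF sinc_C1_differentiable]]) auto

lemma C1_differentiable_on_sinc [derivative_intros]:
  assumes "f C1_differentiable_on S"
  shows "(\<lambda>x. sinc (f x)) C1_differentiable_on S"
proof -
  obtain D where D: "\<And>y. (sinc has_real_derivative D y) (at y)" "continuous_on UNIV D"
    using sinc_C1_differentiable unfolding C1_differentiable_on_real_iff by blast
  obtain Df where Df: "\<And>x. x \<in> S \<Longrightarrow> (f has_real_derivative Df x) (at x)" "continuous_on S Df"
    using assms unfolding C1_differentiable_on_real_iff by blast
  have "continuous_on S (\<lambda>x. D (f x) * Df x)"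
    using C1_differentiable_imp_continuous_on[OF assms]
    by (intro continuous_intros continuous_on_compose2[OF D(2)] Df(2)) auto
  then show ?thesis
    unfolding C1_differentiable_on_real_iff by (intro exI[of _ "\<lambda>x. D (f x) * Df x"] conjI ballI DERIV_chain2[OF D(1) Df(1)])
qed

lemma C1_differentiable_on_divide [derivative_intros]:
  fixes f g :: "real \<Rightarrow> real"
  assumes "f C1_differentiable_on S" "g C1_differentiable_on S" "\<And>x. x \<in> S \<Longrightarrow> g x \<noteq> 0"
  shows "(\<lambda>x. f x / g x) C1_differentiable_on S"
proof -
  obtain Df where Df: "\<And>x. x \<in> S \<Longrightarrow> (f has_real_derivative Df x) (at x)" "continuous_on S Df"
    using assms(1) unfolding C1_differentiable_on_real_iff by blast
  obtain Dg where Dg: "\<And>x. x \<in> S \<Longrightarrow> (g has_real_derivative Dg x) (at x)" "continuous_on S Dg"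
    using assms(2) unfolding C1_differentiable_on_real_iff by blast
  have "continuous_on S (\<lambda>x. (Df x * g x - f x * Dg x) / (g x * g x))"
    using C1_differentiable_imp_continuous_on[OF assms(1)] C1_differentiable_imp_continuous_on[OF assms(2)]
      Df(2) Dg(2) assms(3)
    by (intro continuous_intros) auto
  then show ?thesis
    unfolding C1_differentiable_on_real_iff by (intro exI[of _ "\<lambda>x. (Df x * g x - f x * Dg x) / (g x * g x)"] conjI ballI
        DERIV_divide Df(1) Dg(1) assms(3))
qed

lemma polar_path_has_vector_derivative:
  assumes "(r has_real_derivative r') (at t)"
  shows "((\<lambda>t. of_real (r t) * cis (\<omega> * t)) has_vector_derivative
           (of_real r' + \<i> * of_real (\<omega> * r t)) * cis (\<omega> * t)) (at t)"
proof -
  have "((\<lambda>z. exp (\<i> * of_real \<omega> * z)) has_field_derivative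
          exp (\<i> * of_real \<omega> * of_real t) * (\<i> * of_real \<omega>)) (at (of_real t))"
    by (rule derivative_eq_intros | simp)+
  from has_vector_derivative_real_field[OF this]
  have "((\<lambda>t. cis (\<omega> * t)) has_vector_derivative \<i> * of_real \<omega> * cis (\<omega> * t)) (at t)"
    by (simp add: cis_conv_exp mult.commute mult.left_commute)
  from has_vector_derivative_mult[OF has_vector_derivative_of_real[OF assms] this]
  show ?thesis by (simp add: algebra_simps)
qed

lemma C1_differentiable_on_polar_path:
  assumes "r C1_differentiable_on S"
  shows "(\<lambda>t. of_real (r t) * cis (\<omega> * t)) C1_differentiable_on S"
proof -
  obtain r' where r': "\<And>t. t \<in> S \<Longrightarrow> (r has_real_derivative r' t) (at t)" "continuous_on S r'"
    using assms unfolding C1_differentiable_on_real_iff by blast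
  show ?thesis
    using C1_differentiable_imp_continuous_on[OF assms]
    unfolding C1_differentiable_on_def
    by (intro exI[of _ "\<lambda>t. (of_real (r' t) + \<i> * of_real (\<omega> * r t)) * cis (\<omega> * t)"] conjI ballI
        polar_path_has_vector_derivative r'(1) continuous_intros r'(2))
qed

lemma has_contour_integral_polar_path:
  fixes r h :: "real \<Rightarrow> real"
  assumes r: "r C1_differentiable_on {0..1}" "\<And>t. t \<in> {0..1} \<Longrightarrow> 0 < r t"
    and h: "continuous_on {0..1} h"
    and fh: "\<And>t. t \<in> {0..1} \<Longrightarrow>
      f (of_real (r t) * cis (\<omega> * t)) * (of_real (r t) * cis (\<omega> * t)) = of_real (h t)"
  obtains I where "(f has_contour_integral I) (\<lambda>t. of_real (r t) * cis (\<omega> * t))"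
    and "Im I = \<omega> * integral {0..1} h"
proof -
  obtain r' where r': "\<And>t. t \<in> {0..1} \<Longrightarrow> (r has_real_derivative r' t) (at t)"
    "continuous_on {0..1} r'"
    using r(1) unfolding C1_differentiable_on_real_iff by blast
  define \<gamma> where "\<gamma> t = of_real (r t) * cis (\<omega> * t)" for t
  define k where "k t = of_real (h t) * (of_real (r' t / r t) + \<i> * of_real \<omega>)" for t
  have integrand: "f (\<gamma> t) * vector_derivative \<gamma> (at t) = k t" if t: "t \<in> {0..1}" for t
  proof -
    have "vector_derivative \<gamma> (at t) = (of_real (r' t) + \<i> * of_real (\<omega> * r t)) * cis (\<omega> * t)"
      unfolding \<gamma>_def by (rule vector_derivative_at polar_path_has_vector_derivative r'(1) t)+
    moreover have "f (\<gamma> t) = of_real (h t) / \<gamma> t"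
      using fh[OF t] r(2)[OF t] by (simp add: \<gamma>_def field_simps)
    ultimately show ?thesis
      using r(2)[OF t] by (simp add: \<gamma>_def k_def field_simps)
  qed
  have "continuous_on {0..1} k"
    unfolding k_def using C1_differentiable_imp_continuous_on[OF r(1)] h r'(2) r(2)
    by (intro continuous_intros) force+
  then have k: "(k has_integral integral {0..1} k) {0..1}"
    by (intro integrable_integral integrable_continuous_interval)
  show ?thesis
  proof
    show "(f has_contour_integral integral {0..1} k) (\<lambda>t. of_real (r t) * cis (\<omega> * t))"
      unfolding has_contour_integral \<gamma>_def[symmetric]
      by (rule has_integral_eq[OF _ k]) (simp add: integrand)
    have "Im (integral {0..1} k) = integral {0..1} (Im \<circ> k)"
      using integral_linear[OF has_integral_integrable[OF k] bounded_linear_Im] by simp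
    also have "\<dots> = integral {0..1} (\<lambda>t. \<omega> * h t)"
      by (rule integral_cong) (simp add: k_def)
    finally show "Im (integral {0..1} k) = \<omega> * integral {0..1} h" by simp
  qed
qed

lemma has_contour_integral_iff_eq:
  assumes "(f has_contour_integral I) g"
  shows "(f has_contour_integral J) g \<longleftrightarrow> J = I"
  using has_contour_integral_unique[OF _ assms] assms by blast

lemma has_contour_integral_join_cnj_reversepath:
  assumes f: "(f has_contour_integral I) g" and g: "valid_path g"
    and sym: "\<And>z. z \<in> path_image g \<Longrightarrow> f (cnj z) = cnj (f z)"
  shows "(f has_contour_integral (2 * \<i> * of_real (Im I))) (g +++ reversepath (cnj \<circ> g))"
proof -
  have f_cnj: "\<And>z. z \<in> path_image g \<Longrightarrow> (cnj \<circ> f \<circ> cnj) z = f z"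
    using sym by simp
  have "(cnj \<circ> f \<circ> cnj) contour_integrable_on g"
    using contour_integrable_eq[OF has_contour_integral_integrable[OF f]] f_cnj by metis
  then have "f contour_integrable_on (cnj \<circ> g)"
    using contour_integrable_on_compose_cnj_iff[OF g] by blast
  moreover have "contour_integral (cnj \<circ> g) f = cnj I"
    using contour_integral_cnj[OF g] contour_integral_eq[of g "cnj \<circ> f \<circ> cnj" f, OF f_cnj] contour_integral_unique[OF f]
    by simp
  ultimately have "(f has_contour_integral cnj I) (cnj \<circ> g)"
    using has_contour_integral_integral by metis
  then have "(f has_contour_integral - cnj I) (reversepath (cnj \<circ> g))"
    using g by (intro has_contour_integral_reversepath) (simp_all add: valid_path_cnj)
  from has_contour_integral_join[OF f this g] g
  have "(f has_contour_integral I + - cnj I) (g +++ reversepath (cnj \<circ> g))"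
    by (simp add: valid_path_cnj)
  moreover have "I + - cnj I = 2 * \<i> * of_real (Im I)"
    by (simp add: complex_eq_iff)
  ultimately show ?thesis by simp
qed

lemma continuous_on_comp_scaled:
  fixes g \<rho> :: "real \<Rightarrow> real"
  assumes "continuous_on {0..} g" "continuous_on S \<rho>" "\<And>t. t \<in> S \<Longrightarrow> 0 \<le> \<rho> t" "0 \<le> c"
  shows "continuous_on S (\<lambda>t. g (c * \<rho> t))"
  using assms by (intro continuous_on_compose2[OF assms(1)] continuous_intros) auto

text \<open>|s| and J_1(s) at the point s = arc_pt \<theta> a of the arc, where a = arg (s + 1).\<close>

definition arc_modulus :: "real \<Rightarrow> real \<Rightarrow> real" where
  "arc_modulus \<theta> a = sinc a / (\<theta> * sinc (\<theta> * a))"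

definition arc_J :: "real \<Rightarrow> real \<Rightarrow> real" where
  "arc_J \<theta> a = (\<theta> + 1) * sinc ((\<theta> + 1) * a) / (\<theta> * sinc (\<theta> * a))
     * ((\<theta> + 1) * sinc ((\<theta> + 1) * a) / sinc a) powr (1 / \<theta>)"

lemma arc_parameter_bounds:
  assumes "0 < \<theta>" "0 \<le> a" "a \<le> pi / (\<theta> + 1)"
  shows "\<bar>(\<theta> + 1) * a\<bar> \<le> pi" and "\<bar>\<theta> * a\<bar> < pi" and "\<bar>a\<bar> < pi"
proof -
  show le: "\<bar>(\<theta> + 1) * a\<bar> \<le> pi"
    using assms by (simp add: field_simps)
  have "\<bar>(\<theta> + 1) * a\<bar> = \<theta> * a + a" "0 \<le> \<theta> * a"
    using assms by (simp_all add: distrib_right)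
  moreover have "0 < \<theta> * a \<and> 0 < a \<or> a = 0"
    using assms by auto
  ultimately show "\<bar>\<theta> * a\<bar> < pi" "\<bar>a\<bar> < pi"
    using le pi_gt_zero by auto
qed

lemma arc_parameter_range:
  assumes "0 < \<theta>" "t \<in> {0..1}"
  shows "0 \<le> t * (pi / (\<theta> + 1))" and "t * (pi / (\<theta> + 1)) \<le> pi / (\<theta> + 1)"
  using assms by (simp, intro mult_left_le_one_le) auto

lemma scaled_sinc_ratio:
  assumes "a \<noteq> 0"
  shows "k * sinc (k * a) / (l * sinc (l * a)) = sin (k * a) / sin (l * a)"
proof -
  have scaled: "x * sinc (x * a) = sin (x * a) / a" for x
    using sin_eq_times_sinc[of "x * a"] assms by (simp add: field_simps)
  show ?thesis
    unfolding scaled using assms by (cases "sin (l * a) = 0") (simp_all add: field_simps)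
qed

lemma arc_pt_polar: "arc_pt \<theta> a = of_real (arc_modulus \<theta> a) * cis ((\<theta> + 1) * a)"
proof (cases "a = 0")
  case False
  then have "arc_modulus \<theta> a = sin a / sin (\<theta> * a)"
    using scaled_sinc_ratio[of a 1 \<theta>] by (simp add: arc_modulus_def)
  then show ?thesis using False by (simp add: arc_pt_def)
qed (simp add: arc_pt_def arc_modulus_def)

lemma gamma_up_polar:
  assumes "\<theta> + 1 \<noteq> 0"
  shows "gamma_up \<theta> = (\<lambda>t. of_real (arc_modulus \<theta> (t * (pi / (\<theta> + 1)))) * cis (pi * t))"
proof -
  have "(\<theta> + 1) * (t * (pi / (\<theta> + 1))) = pi * t" for t
    using assms by simp
  then show ?thesis unfolding gamma_up_def arc_pt_polar by simp
qed

lemma arc_pt_plus_one: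
  assumes "a \<noteq> 0" "sin (\<theta> * a) \<noteq> 0"
  shows "arc_pt \<theta> a + 1 = of_real (sin ((\<theta> + 1) * a) / sin (\<theta> * a)) * cis a"
proof (rule complex_eqI)
  have sq: "sin (\<theta> * a) = cos a * (cos a * sin (\<theta> * a)) + sin a * (sin a * sin (\<theta> * a))"
    using sin_cos_squared_add[of a] by algebra
  show "Re (arc_pt \<theta> a + 1) = Re (of_real (sin ((\<theta> + 1) * a) / sin (\<theta> * a)) * cis a)"
    using assms unfolding arc_pt_def distrib_right
    by (simp add: cos_add sin_add field_simps) (metis sq)
  show "Im (arc_pt \<theta> a + 1) = Im (of_real (sin ((\<theta> + 1) * a) / sin (\<theta> * a)) * cis a)"
    using assms unfolding arc_pt_def distrib_right
    by (simp add: cos_add sin_add field_simps)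
qed

lemma one_plus_inverse_arc_pt:
  assumes "a \<noteq> 0" "sin a \<noteq> 0" "sin (\<theta> * a) \<noteq> 0"
  shows "1 + 1 / arc_pt \<theta> a = of_real (sin ((\<theta> + 1) * a) / sin a) * cis (- (\<theta> * a))"
proof -
  have s: "arc_pt \<theta> a = of_real (sin a / sin (\<theta> * a)) * cis ((\<theta> + 1) * a)"
    using assms by (simp add: arc_pt_def)
  then have "arc_pt \<theta> a \<noteq> 0"
    using assms by simp
  then have "1 + 1 / arc_pt \<theta> a = (arc_pt \<theta> a + 1) / arc_pt \<theta> a"
    by (simp add: field_simps)
  also have "\<dots> = of_real (sin ((\<theta> + 1) * a) / sin (\<theta> * a) / (sin a / sin (\<theta> * a)))
      * (cis a / cis ((\<theta> + 1) * a))"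
    by (subst arc_pt_plus_one[OF assms(1,3)]) (simp add: s)
  also have "\<dots> = of_real (sin ((\<theta> + 1) * a) / sin a) * cis (- (\<theta> * a))"
    using assms by (simp add: cis_divide algebra_simps)
  finally show ?thesis .
qed

lemma powr_of_real_times_cis:
  assumes "0 \<le> P" "-pi < x" "x \<le> pi"
  shows "(of_real P * cis x) powr of_real e = of_real (P powr e) * cis (e * x)"
proof (cases "P = 0")
  case False
  have "cis x powr of_real e = exp (of_real e * (of_real x * \<i>))"
    using assms by (simp add: powr_def Ln_cis)
  then have "cis x powr of_real e = cis (e * x)"
    by (simp add: cis_conv_exp mult_ac)
  then show ?thesis
    using assms by (simp add: powr_times_real_left powr_of_real)
qed simp

lemma Jc_cnj:
  assumes "Im (1 + 1 / s) = 0 \<Longrightarrow> 0 \<le> Re (1 + 1 / s)"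
  shows "Jc \<theta> c (cnj s) = cnj (Jc \<theta> c s)"
  using cnj_powr[OF assms, of "of_real (1 / \<theta>)"] by (simp add: Jc_def)

lemma arc_sines:
  assumes "0 < \<theta>" "0 < a" "a \<le> pi / (\<theta> + 1)"
  shows "0 < sin a" and "0 < sin (\<theta> * a)" and "0 \<le> sin ((\<theta> + 1) * a)"
  using arc_parameter_bounds[of \<theta> a] assms by (auto intro!: sin_gt_zero sin_ge_zero)

lemma Jc_arc_pt:
  assumes "0 < \<theta>" "0 \<le> a" "a \<le> pi / (\<theta> + 1)"
  shows "Jc \<theta> c (arc_pt \<theta> a) = of_real (c * arc_J \<theta> a)"
proof (cases "a = 0")
  case True
  have "(1 + 1 / complex_of_real (1 / \<theta>)) powr of_real (1 / \<theta>) = of_real ((\<theta> + 1) powr (1 / \<theta>))"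
    using assms powr_of_real[of "\<theta> + 1" "1 / \<theta>"] by (simp add: add.commute)
  then show ?thesis
    using True assms by (simp add: Jc_def arc_pt_def arc_J_def field_simps)
next
  case False
  then have a: "0 < a" using assms by simp
  note sines = arc_sines[OF assms(1) a assms(3)]
  define P where "P = sin ((\<theta> + 1) * a) / sin a"
  have P: "0 \<le> P" "-pi < - (\<theta> * a)" "- (\<theta> * a) \<le> pi"
    using sines arc_parameter_bounds[OF assms] by (auto simp: P_def)
  have powr: "(1 + 1 / arc_pt \<theta> a) powr of_real (1 / \<theta>) = of_real (P powr (1 / \<theta>)) * cis (- a)"
    using one_plus_inverse_arc_pt[OF False] powr_of_real_times_cis[OF P, of "1 / \<theta>"] sines assms(1)
    by (simp add: P_def)
  have "Jc \<theta> c (arc_pt \<theta> a) = of_real c * (of_real (sin ((\<theta> + 1) * a) / sin (\<theta> * a)) * cis a)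
      * (of_real (P powr (1 / \<theta>)) * cis (- a))"
    unfolding Jc_def arc_pt_plus_one[OF False less_imp_neq[OF sines(2), symmetric]] powr ..
  also have "\<dots> = of_real (c * (sin ((\<theta> + 1) * a) / sin (\<theta> * a) * P powr (1 / \<theta>)))
      * (cis a * cis (- a))"
    by (simp only: of_real_mult mult_ac)
  also have "\<dots> = of_real (c * (sin ((\<theta> + 1) * a) / sin (\<theta> * a) * P powr (1 / \<theta>)))"
    by (simp only: cis_mult add.right_inverse cis_zero mult_1_right)
  also have "\<dots> = of_real (c * arc_J \<theta> a)"
    unfolding arc_J_def P_def scaled_sinc_ratio[OF False]
      scaled_sinc_ratio[OF False, of "\<theta> + 1" 1, unfolded mult_1 mult_1_left]
    by (rule refl)
  finally show ?thesis .
qed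

lemma Jc_cnj_arc_pt:
  assumes "0 < \<theta>" "0 \<le> a" "a \<le> pi / (\<theta> + 1)"
  shows "Jc \<theta> c (cnj (arc_pt \<theta> a)) = cnj (Jc \<theta> c (arc_pt \<theta> a))"
proof (cases "a = 0")
  case False
  then have a: "0 < a" using assms by simp
  note sines = arc_sines[OF assms(1) a assms(3)]
  show ?thesis
  proof (rule Jc_cnj)
    assume "Im (1 + 1 / arc_pt \<theta> a) = 0"
    then show "0 \<le> Re (1 + 1 / arc_pt \<theta> a)"
      using sines by (simp add: one_plus_inverse_arc_pt False)
  qed
qed (use Jc_arc_pt[OF assms, of c] in \<open>simp add: arc_pt_def\<close>)

lemma arc_modulus_pos:
  assumes "0 < \<theta>" "0 \<le> a" "a \<le> pi / (\<theta> + 1)"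
  shows "0 < arc_modulus \<theta> a"
  using arc_parameter_bounds[OF assms] assms(1) by (simp add: arc_modulus_def sinc_pos)

lemma arc_J_profile:
  assumes "0 < \<theta>"
  shows "continuous_on {0..1} (\<lambda>t. arc_J \<theta> (t * (pi / (\<theta> + 1))))"
    and "t \<in> {0..1} \<Longrightarrow> 0 \<le> arc_J \<theta> (t * (pi / (\<theta> + 1)))"
    and "t \<in> {0..<1} \<Longrightarrow> 0 < arc_J \<theta> (t * (pi / (\<theta> + 1)))"
proof -
  have angle: "(\<theta> + 1) * (t * (pi / (\<theta> + 1))) = pi * t" for t
    using assms by simp
  have bounds: "\<bar>pi * t\<bar> \<le> pi" "0 < sinc (\<theta> * (t * (pi / (\<theta> + 1))))"
      "0 < sinc (t * (pi / (\<theta> + 1)))" if "t \<in> {0..1}" for t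
  proof -
    note b = arc_parameter_bounds[OF assms arc_parameter_range[OF assms that]]
    show "\<bar>pi * t\<bar> \<le> pi" "0 < sinc (\<theta> * (t * (pi / (\<theta> + 1))))"
      "0 < sinc (t * (pi / (\<theta> + 1)))"
      using b(1) sinc_pos[OF b(2)] sinc_pos[OF b(3)] unfolding angle by simp_all
  qed
  have base: "continuous_on {0..1} (\<lambda>t. (\<theta> + 1) * sinc (pi * t) / sinc (t * (pi / (\<theta> + 1))))"
    using bounds(3) by (intro continuous_intros) (metis less_irrefl)
  have "continuous_on {0..1} (\<lambda>t. (\<theta> + 1) * sinc (pi * t) / (\<theta> * sinc (\<theta> * (t * (pi / (\<theta> + 1))))))"
    using assms bounds(2) by (intro continuous_intros) (metis less_irrefl mult_eq_0_iff)
  moreover have "continuous_on {0..1} (\<lambda>t. ((\<theta> + 1) * sinc (pi * t) / sinc (t * (pi / (\<theta> + 1)))) powr (1 / \<theta>))"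
    by (rule continuous_on_powr'[OF base continuous_on_const])
      (use bounds sinc_nonneg assms in \<open>simp add: less_imp_le\<close>)
  ultimately show "continuous_on {0..1} (\<lambda>t. arc_J \<theta> (t * (pi / (\<theta> + 1))))"
    unfolding arc_J_def angle by (rule continuous_on_mult)
  show "0 \<le> arc_J \<theta> (t * (pi / (\<theta> + 1)))" if "t \<in> {0..1}"
    unfolding arc_J_def angle using bounds[OF that] sinc_nonneg[OF bounds(1)[OF that]] assms
    by simp
  show "0 < arc_J \<theta> (t * (pi / (\<theta> + 1)))" if "t \<in> {0..<1}"
  proof -
    have "0 < sinc (pi * t)" using that by (intro sinc_pos) auto
    then show ?thesis
      unfolding arc_J_def angle using bounds[of t] that assms by simp
  qed
qed

lemma C1_differentiable_on_arc_modulus: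
  assumes "0 < \<theta>"
  shows "(\<lambda>t. arc_modulus \<theta> (t * (pi / (\<theta> + 1)))) C1_differentiable_on {0..1}"
proof -
  have "\<theta> * sinc (\<theta> * (t * (pi / (\<theta> + 1)))) \<noteq> 0" if "t \<in> {0..1}" for t
    using assms sinc_pos[OF arc_parameter_bounds(2)[OF assms arc_parameter_range[OF assms that]]]
    by simp
  then show ?thesis
    unfolding arc_modulus_def by (intro derivative_intros)
qed

lemma valid_path_gamma_up:
  assumes "0 < \<theta>"
  shows "valid_path (gamma_up \<theta>)"
proof -
  have "\<theta> + 1 \<noteq> 0" using assms by simp
  show ?thesis
    unfolding gamma_up_polar[OF \<open>\<theta> + 1 \<noteq> 0\<close>] valid_path_def
    by (intro C1_differentiable_imp_piecewise C1_differentiable_on_polar_path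
        C1_differentiable_on_arc_modulus assms)
qed

lemma Im_contour_integral_gamma_up:
  fixes W :: "real \<Rightarrow> real"
  assumes \<theta>: "0 < \<theta>" and W: "continuous_on {0..} W" and c: "0 \<le> c"
  defines "\<rho> \<equiv> \<lambda>t. arc_J \<theta> (t * (pi / (\<theta> + 1)))"
  obtains I where "((\<lambda>s. of_real (W (Re (Jc \<theta> c s))) * Jc \<theta> c s / s) has_contour_integral I)
      (gamma_up \<theta>)"
    and "Im I = pi * integral {0..1} (\<lambda>t. c * \<rho> t * W (c * \<rho> t))"
proof -
  define r where "r t = arc_modulus \<theta> (t * (pi / (\<theta> + 1)))" for t
  have polar: "gamma_up \<theta> = (\<lambda>t. of_real (r t) * cis (pi * t))"
    using gamma_up_polar[of \<theta>] \<theta> by (simp add: r_def)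
  have r_pos: "0 < r t" if "t \<in> {0..1}" for t
    unfolding r_def using arc_modulus_pos[OF \<theta> arc_parameter_range[OF \<theta> that]] .
  have "of_real (W (Re (Jc \<theta> c (of_real (r t) * cis (pi * t))))) * Jc \<theta> c (of_real (r t) * cis (pi * t))
      / (of_real (r t) * cis (pi * t)) * (of_real (r t) * cis (pi * t))
      = of_real (c * \<rho> t * W (c * \<rho> t))" if "t \<in> {0..1}" for t
  proof -
    have "of_real (r t) * cis (pi * t) = arc_pt \<theta> (t * (pi / (\<theta> + 1)))"
      using fun_cong[OF polar, of t] by (simp only: gamma_up_def)
    then have "Jc \<theta> c (of_real (r t) * cis (pi * t)) = of_real (c * \<rho> t)"
      using Jc_arc_pt[OF \<theta> arc_parameter_range[OF \<theta> that]] by (simp add: \<rho>_def)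
    then show ?thesis
      using r_pos[OF that] by simp
  qed
  moreover have "continuous_on {0..1} (\<lambda>t. c * \<rho> t * W (c * \<rho> t))"
    unfolding \<rho>_def using arc_J_profile[OF \<theta>] c
    by (intro continuous_intros continuous_on_comp_scaled[OF W]) auto
  ultimately show ?thesis
    using that has_contour_integral_polar_path[OF C1_differentiable_on_arc_modulus[OF \<theta>, folded r_def]
        r_pos, where f = "\<lambda>s. of_real (W (Re (Jc \<theta> c s))) * Jc \<theta> c s / s" and \<omega> = pi]
    unfolding polar by blast
qed

lemma gamma_curve_has_contour_integral:
  fixes W :: "real \<Rightarrow> real"
  assumes \<theta>: "0 < \<theta>" and W: "continuous_on {0..} W" and c: "0 \<le> c"
  defines "\<rho> \<equiv> \<lambda>t. arc_J \<theta> (t * (pi / (\<theta> + 1)))"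
  shows "((\<lambda>s. of_real (W (Re (Jc \<theta> c s))) * Jc \<theta> c s / s) has_contour_integral
    2 * of_real pi * \<i> * of_real (integral {0..1} (\<lambda>t. c * \<rho> t * W (c * \<rho> t)))) (gamma_curve \<theta>)"
proof -
  define F where "F = (\<lambda>s. of_real (W (Re (Jc \<theta> c s))) * Jc \<theta> c s / s)"
  obtain I where I: "(F has_contour_integral I) (gamma_up \<theta>)"
    "Im I = pi * integral {0..1} (\<lambda>t. c * \<rho> t * W (c * \<rho> t))"
    using Im_contour_integral_gamma_up[OF \<theta> W c] unfolding F_def \<rho>_def by blast
  have "F (cnj z) = cnj (F z)" if z: "z \<in> path_image (gamma_up \<theta>)" for z
  proof -
    obtain t where "t \<in> {0..1}" "z = arc_pt \<theta> (t * (pi / (\<theta> + 1)))"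
      using z unfolding path_image_def gamma_up_def by blast
    then show ?thesis
      using Jc_cnj_arc_pt[OF \<theta> arc_parameter_range[OF \<theta>], of t c] by (simp add: F_def)
  qed
  then have "(F has_contour_integral 2 * \<i> * of_real (Im I)) (gamma_curve \<theta>)"
    unfolding gamma_curve_def
    by (rule has_contour_integral_join_cnj_reversepath[OF I(1) valid_path_gamma_up[OF \<theta>]])
  also have "2 * \<i> * of_real (Im I) = 2 * of_real pi * \<i> * of_real (integral {0..1} (\<lambda>t. c * \<rho> t * W (c * \<rho> t)))"
    by (simp add: I(2))
  finally show ?thesis
    by (simp only: F_def)
qed

lemma has_real_derivative_at_if_within_atLeast:
  assumes "(f has_real_derivative D) (at x within {a..})" "a < x"
  shows "(f has_real_derivative D) (at x)"
proof -
  have "(f has_real_derivative D) (at x within {a<..})"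
    using assms(1) by (rule has_field_derivative_subset) auto
  then show ?thesis
    using assms(2) at_within_open[of x "{a<..}"] by simp
qed

lemma strict_mono_on_times_deriv:
  fixes V' V'' :: "real \<Rightarrow> real"
  assumes deriv: "\<And>x. 0 \<le> x \<Longrightarrow> (V' has_real_derivative V'' x) (at x within {0..})"
    and pos: "\<And>x. 0 < x \<Longrightarrow> 0 < V'' x * x + V' x"
  shows "strict_mono_on {0..} (\<lambda>x. x * V' x)"
proof (rule strict_mono_onI)
  fix x y :: real assume xy: "x \<in> {0..}" "y \<in> {0..}" "x < y"
  have "continuous_on {0..} V'"
    using deriv by (intro DERIV_continuous_on) auto
  then have cont: "continuous_on {x..y} (\<lambda>x. x * V' x)"
    by (rule continuous_on_subset[THEN continuous_on_mult[OF continuous_on_id]]) (use xy in auto)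
  show "x * V' x < y * V' y"
  proof (rule DERIV_pos_imp_increasing_open[OF \<open>x < y\<close> _ cont])
    fix z assume "x < z" "z < y"
    then have z: "0 < z" using xy by simp
    have "((\<lambda>x. x * V' x) has_real_derivative 1 * V' z + V'' z * z) (at z)"
      by (rule DERIV_mult[OF DERIV_ident has_real_derivative_at_if_within_atLeast[OF deriv z]])
        (use z in simp)
    then show "\<exists>D. ((\<lambda>x. x * V' x) has_real_derivative D) (at z) \<and> 0 < D"
      using pos[OF z] by auto
  qed
qed

lemma times_deriv_unbounded:
  fixes V V' :: "real \<Rightarrow> real"
  assumes deriv: "\<And>x. 1 \<le> x \<Longrightarrow> (V has_real_derivative V' x) (at x)"
    and lim: "filterlim (\<lambda>x. V x / ln x) at_top at_top"
  shows "\<exists>x\<ge>1. M < x * V' x"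
proof (rule ccontr)
  assume "\<not> ?thesis"
  then have bound: "\<And>x. 1 \<le> x \<Longrightarrow> x * V' x \<le> M"
    by (simp add: not_less)
  have growth: "V x \<le> V 1 + M * ln x" if "1 \<le> x" for x
  proof -
    have "V x - M * ln x \<le> V 1 - M * ln 1"
    proof (rule DERIV_nonpos_imp_nonincreasing[OF that])
      fix z assume z: "1 \<le> z" "z \<le> x"
      have "((\<lambda>x. V x - M * ln x) has_real_derivative V' z - M * (1 / z)) (at z)"
        using z by (intro DERIV_diff deriv DERIV_cmult DERIV_ln_divide) auto
      moreover have "V' z \<le> M / z"
        using bound[of z] z by (simp add: field_simps)
      ultimately show "\<exists>D. ((\<lambda>x. V x - M * ln x) has_real_derivative D) (at z) \<and> D \<le> 0"
        by force
    qed
    then show ?thesis by simp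
  qed
  have "eventually (\<lambda>x. exp 1 \<le> x \<and> \<bar>V 1\<bar> + M + 1 \<le> V x / ln x) at_top"
    using lim unfolding filterlim_at_top by (intro eventually_conj eventually_ge_at_top) auto
  then obtain x where x: "exp 1 \<le> x" "\<bar>V 1\<bar> + M + 1 \<le> V x / ln x"
    using eventually_happens'[OF trivial_limit_at_top_linorder] by blast
  have x1: "1 \<le> x" using x(1) one_le_exp_iff[of 1] by linarith
  have ln: "1 \<le> ln x"
    using x(1) by (metis exp_gt_zero ln_exp ln_le_cancel_iff order_less_le_trans)
  have "\<bar>V 1\<bar> * 1 \<le> \<bar>V 1\<bar> * ln x"
    using ln by (intro mult_left_mono) auto
  then have "V x \<le> (\<bar>V 1\<bar> + M) * ln x"
    using growth[OF x1] by (simp add: distrib_right)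
  then have "V x / ln x \<le> \<bar>V 1\<bar> + M"
    using ln by (simp add: pos_divide_le_eq)
  then show False using x(2) by simp
qed

lemma integral_pos_if_continuous_nonneg:
  fixes f :: "real \<Rightarrow> real"
  assumes f: "continuous_on {a..b} f" "\<And>x. x \<in> {a..b} \<Longrightarrow> 0 \<le> f x"
    and x0: "x0 \<in> {a..b}" "0 < f x0" and "a < b"
  shows "0 < integral {a..b} f"
proof -
  have int: "f integrable_on {a..b}"
    using f(1) by (rule integrable_continuous_interval)
  have "integral {a..b} f \<noteq> 0"
  proof
    assume "integral {a..b} f = 0"
    then have "(f has_integral 0) (cbox a b)"
      using int by (metis has_integral_integral cbox_interval)
    then have "f x0 = 0"
      using f x0(1) \<open>a < b\<close>
      by (intro has_integral_0_cbox_imp_0) (auto simp: cbox_interval box_real)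
    with x0(2) show False by simp
  qed
  moreover have "0 \<le> integral {a..b} f"
    using int f(2) by (rule integral_nonneg)
  ultimately show ?thesis by simp
qed

lemma continuous_on_integral_comp_scaled:
  fixes g \<rho> :: "real \<Rightarrow> real"
  assumes g: "continuous_on {0..} g"
    and \<rho>: "continuous_on {0..1} \<rho>" "\<And>t. t \<in> {0..1} \<Longrightarrow> 0 \<le> \<rho> t"
  shows "continuous_on {0..} (\<lambda>c. integral {0..1} (\<lambda>t. g (c * \<rho> t)))"
proof -
  have "continuous_on ({0..} \<times> {0..1}) (\<lambda>p. \<rho> (snd p))"
    by (rule continuous_on_compose2[OF \<rho>(1) continuous_on_snd]) auto
  then have "continuous_on ({0..} \<times> {0..1}) (\<lambda>p. g (fst p * \<rho> (snd p)))"
    using \<rho>(2) by (intro continuous_on_compose2[OF g] continuous_intros) auto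
  then show ?thesis
    using integral_continuous_on_param[of "{0..}" 0 1 "\<lambda>c t. g (c * \<rho> t)"]
    by (simp add: split_beta cbox_interval)
qed

lemma strict_mono_on_integral_comp_scaled:
  fixes g \<rho> :: "real \<Rightarrow> real"
  assumes g: "continuous_on {0..} g" "strict_mono_on {0..} g"
    and \<rho>: "continuous_on {0..1} \<rho>" "\<And>t. t \<in> {0..1} \<Longrightarrow> 0 \<le> \<rho> t" "0 < \<rho> 0"
  shows "strict_mono_on {0..} (\<lambda>c. integral {0..1} (\<lambda>t. g (c * \<rho> t)))"
proof (rule strict_mono_onI)
  fix c1 c2 :: real assume c: "c1 \<in> {0..}" "c2 \<in> {0..}" "c1 < c2"
  define d where "d t = g (c2 * \<rho> t) - g (c1 * \<rho> t)" for t
  have int: "(\<lambda>t. g (c * \<rho> t)) integrable_on {0..1}" if "c \<in> {0..}" for c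
    using that by (intro integrable_continuous_interval continuous_on_comp_scaled g(1) \<rho>) auto
  have "0 < integral {0..1} d"
  proof (rule integral_pos_if_continuous_nonneg)
    show "continuous_on {0..1} d"
      unfolding d_def using c by (intro continuous_intros continuous_on_comp_scaled g(1) \<rho>) auto
    show "0 \<le> d t" if "t \<in> {0..1}" for t
      unfolding d_def using c \<rho>(2)[OF that]
      by (auto intro!: strict_mono_on_leD[OF g(2)] mult_right_mono)
    show "0 < d 0"
      unfolding d_def using c \<rho>(3) by (auto intro!: strict_mono_onD[OF g(2)])
  qed auto
  also have "integral {0..1} d = integral {0..1} (\<lambda>t. g (c2 * \<rho> t)) - integral {0..1} (\<lambda>t. g (c1 * \<rho> t))"
    unfolding d_def using c by (intro integral_diff int) auto
  finally show "integral {0..1} (\<lambda>t. g (c1 * \<rho> t)) < integral {0..1} (\<lambda>t. g (c2 * \<rho> t))"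
    by simp
qed

lemma integral_comp_scaled_unbounded:
  fixes g \<rho> :: "real \<Rightarrow> real"
  assumes g: "continuous_on {0..} g" "mono_on {0..} g" "\<And>M. \<exists>x\<ge>0. M < g x"
    and \<rho>: "continuous_on {0..1} \<rho>" "\<And>t. t \<in> {0..1} \<Longrightarrow> 0 \<le> \<rho> t"
      "\<And>t. t \<in> {0..<1} \<Longrightarrow> 0 < \<rho> t"
  shows "\<exists>c\<ge>0. M < integral {0..1} (\<lambda>t. g (c * \<rho> t))"
proof -
  obtain t0 where t0: "t0 \<in> {0..1/2}" and min: "\<And>t. t \<in> {0..1/2} \<Longrightarrow> \<rho> t0 \<le> \<rho> t"
    using continuous_attains_inf[of "{0..1/2}" \<rho>] continuous_on_subset[OF \<rho>(1)] by force
  define m where "m = \<rho> t0"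
  have m: "0 < m" unfolding m_def using t0 by (intro \<rho>(3)) auto
  obtain x where x: "0 \<le> x" "2 * M - g 0 < g x" using g(3) by blast
  define c where "c = x / m"
  have c: "0 \<le> c" "c * m = x" unfolding c_def using x m by simp_all
  have int: "(\<lambda>t. g (c * \<rho> t)) integrable_on {a..b}" if "{a..b} \<subseteq> {0..1}" for a b
    using that c(1) \<rho>(2)
    by (intro integrable_continuous_interval continuous_on_comp_scaled g(1)
        continuous_on_subset[OF \<rho>(1)]) auto
  have "integral {0..1/2} (\<lambda>t::real. g x) \<le> integral {0..1/2} (\<lambda>t. g (c * \<rho> t))"
  proof (rule integral_le)
    fix t :: real assume t: "t \<in> {0..1/2}"
    have "c * m \<le> c * \<rho> t" using min[OF t] c(1) unfolding m_def by (rule mult_left_mono)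
    then show "g x \<le> g (c * \<rho> t)" using c x(1) by (intro mono_onD[OF g(2)]) auto
  qed (use int in auto)
  moreover have "integral {1/2..1} (\<lambda>t::real. g 0) \<le> integral {1/2..1} (\<lambda>t. g (c * \<rho> t))"
    using int c(1) \<rho>(2) by (intro integral_le mono_onD[OF g(2)]) auto
  moreover have "integral {0..1/2} (\<lambda>t. g (c * \<rho> t)) + integral {1/2..1} (\<lambda>t. g (c * \<rho> t))
      = integral {0..1} (\<lambda>t. g (c * \<rho> t))"
    by (rule Henstock_Kurzweil_Integration.integral_combine) (use int in auto)
  ultimately have "M < integral {0..1} (\<lambda>t. g (c * \<rho> t))"
    using x(2) by simp
  then show ?thesis using c(1) by blast
qed

lemma ex1_integral_comp_scaled_eq:
  fixes g \<rho> :: "real \<Rightarrow> real"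
  assumes g: "continuous_on {0..} g" "strict_mono_on {0..} g" "\<And>M. \<exists>x\<ge>0. M < g x"
    and \<rho>: "continuous_on {0..1} \<rho>" "\<And>t. t \<in> {0..1} \<Longrightarrow> 0 \<le> \<rho> t"
      "\<And>t. t \<in> {0..<1} \<Longrightarrow> 0 < \<rho> t"
    and y: "g 0 < y"
  shows "\<exists>!c. 0 < c \<and> integral {0..1} (\<lambda>t. g (c * \<rho> t)) = y"
proof -
  define \<Phi> where "\<Phi> c = integral {0..1} (\<lambda>t. g (c * \<rho> t))" for c
  have \<Phi>0: "\<Phi> 0 = g 0" by (simp add: \<Phi>_def)
  have cont: "continuous_on {0..} \<Phi>"
    unfolding \<Phi>_def[abs_def] using g(1) \<rho>(1,2) by (rule continuous_on_integral_comp_scaled)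
  have inj: "inj_on \<Phi> {0..}"
    unfolding \<Phi>_def[abs_def] using \<rho>(3)[of 0]
    by (intro strict_mono_on_imp_inj_on strict_mono_on_integral_comp_scaled g(1,2) \<rho>(1,2)) auto
  obtain C where C: "0 \<le> C" "y < \<Phi> C"
    unfolding \<Phi>_def using integral_comp_scaled_unbounded[OF g(1) strict_mono_on_imp_mono_on[OF g(2)] g(3) \<rho>]
    by blast
  obtain c where c: "0 \<le> c" "\<Phi> c = y"
    using IVT'[of \<Phi> 0 y C] continuous_on_subset[OF cont] C y \<Phi>0 by force
  have "0 < c" using c y \<Phi>0 by (cases "c = 0") auto
  moreover have "c' = c" if "0 < c'" "\<Phi> c' = y" for c'
    using inj_onD[OF inj, of c' c] that c by simp
  ultimately show ?thesis
    unfolding \<Phi>_def[symmetric] using c(2) by blast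
qed

lemma gamma_curve_has_contour_integral_iff:
  fixes W :: "real \<Rightarrow> real"
  assumes "0 < \<theta>" "continuous_on {0..} W" "0 \<le> c"
  defines "\<rho> \<equiv> \<lambda>t. arc_J \<theta> (t * (pi / (\<theta> + 1)))"
  shows "((\<lambda>s. of_real (W (Re (Jc \<theta> c s))) * Jc \<theta> c s / s) has_contour_integral
      2 * of_real pi * \<i> * of_real y) (gamma_curve \<theta>) \<longleftrightarrow>
    integral {0..1} (\<lambda>t. c * \<rho> t * W (c * \<rho> t)) = y"
  unfolding has_contour_integral_iff_eq[OF gamma_curve_has_contour_integral[OF assms(1-3)]] \<rho>_def
  by (simp only: mult_cancel_left of_real_eq_iff) auto

theorem lemma4p2:
  fixes \<theta> :: real and V V' V'' :: "real \<Rightarrow> real"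
  assumes "\<theta> \<ge> 1"
    and "\<And>x. x \<ge> 0 \<Longrightarrow> (V has_real_derivative V' x) (at x within {0..})"
    and "\<And>x. x \<ge> 0 \<Longrightarrow> (V' has_real_derivative V'' x) (at x within {0..})"
    and "continuous_on {0..} V''"
    and "filterlim (\<lambda>x. V x / ln x) at_top at_top"
    and "\<And>x. x > 0 \<Longrightarrow> V'' x * x + V' x > 0"
    and "\<And>x. x > 0 \<Longrightarrow> V'' x \<ge> 0"
  shows "\<exists>!c. c > 0 \<and>
    ((\<lambda>s. complex_of_real (V' (Re (Jc \<theta> c s))) * Jc \<theta> c s / s)
       has_contour_integral (2 * of_real pi * \<i> * complex_of_real (1 + \<theta>))) (gamma_curve \<theta>)"
proof -
  have \<theta>: "0 < \<theta>" using assms(1) by simp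
  have V': "continuous_on {0..} V'"
    using assms(3) by (intro DERIV_continuous_on) auto
  have "(V has_real_derivative V' x) (at x)" if "1 \<le> x" for x
    using assms(2)[of x] that by (intro has_real_derivative_at_if_within_atLeast) auto
  then have unbounded: "\<exists>x\<ge>0. M < x * V' x" for M
    using times_deriv_unbounded[OF _ assms(5), of V' M] by (meson order.trans zero_le_one)
  have "continuous_on {0..} (\<lambda>x. x * V' x)"
    using V' by (intro continuous_intros)
  from ex1_integral_comp_scaled_eq[where y = "1 + \<theta>", OF this
      strict_mono_on_times_deriv[OF assms(3,6)] unbounded arc_J_profile[OF \<theta>]]
  have "\<exists>!c. 0 < c \<and> integral {0..1} (\<lambda>t. c * arc_J \<theta> (t * (pi / (\<theta> + 1)))
      * V' (c * arc_J \<theta> (t * (pi / (\<theta> + 1))))) = 1 + \<theta>"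
    using \<theta> by simp
  then show ?thesis
    by (simp only: gamma_curve_has_contour_integral_iff[OF \<theta> V'] less_imp_le cong: conj_cong)
qed

end
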